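(* Let $\Gamma$ be the semigroup associated to an irreducible plane curve singularity, minimally generated by $r_0<\cdots<r_h$, with conductor $c$. If $h\ge 2$, then $h\le \log_2\!\left(\frac{\sqrt{60c+1}+9}{10}\right)$.
   Context: A numerical semigroup is a submonoid of $(\mathbb N,+)$ with finite complement in $\mathbb N$; it has a unique minimal generating system. The conductor is $c=\mathrm F(\Gamma)+1$, where $\mathrm F(\Gamma)$ is the largest integer not in $\Gamma$. $\langle X\rangle$ is the submonoid generated by $X$. For an arrangement $(r_0,\ldots,r_h)$ of the minimal generators, set $d_k=\gcd(r_0,\ldots,r_{k-1})$ and $e_k=d_k/d_{k+1}$. A set $A$ of positive integers with nontrivial partition $A=A_1\cup A_2$ is the gluing of $A_1$ and $A_2$ if $\mathrm{lcm}(\gcd A_1,\gcd A_2)\in\langle A_1\rangle\cap\langle A_2\rangle$. $\Gamma$ is free for $(r_0,\ldots,r_h)$ if $h=0$, or $h\ge1$, $\{r_0,\ldots,r_h\}$ is the gluing of $\{r_0,\ldots,r_{h-1}\}$ and $\{r_h\}$, and $\langle r_0/d_h,\ldots,r_{h-1}/d_h\rangle$ is free for $(r_0/d_h,\ldots,r_{h-1}/d_h)$. $\Gamma$ is telescopic if it is free for the increasing arrangement $r_0<\cdots<r_h$. $\Gamma$ is the semigroup associated to an irreducible plane curve singularity if it is telescopic and $e_kr_k<r_{k+1}$ for all $k=1,\ldots,h-1$. *)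

theory Defs
  imports Complex_Main
begin

inductive_set monoid_gen :: "nat set \<Rightarrow> nat set" for X :: "nat set" where
  zero: "0 \<in> monoid_gen X"
| add: "x \<in> X \<Longrightarrow> y \<in> monoid_gen X \<Longrightarrow> x + y \<in> monoid_gen X"

definition numerical_semigroup :: "nat set \<Rightarrow> bool" where
  "numerical_semigroup S \<longleftrightarrow> 0 \<in> S \<and> (\<forall>x\<in>S. \<forall>y\<in>S. x + y \<in> S) \<and> finite (UNIV - S)"

definition minimally_generated_by :: "nat set \<Rightarrow> (nat \<Rightarrow> nat) \<Rightarrow> nat \<Rightarrow> bool" where
  "minimally_generated_by S r h \<longleftrightarrow>
     S = monoid_gen (r ` {..h}) \<and> (\<forall>i\<le>h. 0 < r i \<and> r i \<notin> monoid_gen (r ` ({..h} - {i})))"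

definition conductor :: "nat set \<Rightarrow> nat" where
  "conductor S = (if S = UNIV then 0 else Max (UNIV - S) + 1)"

definition is_gluing :: "nat set \<Rightarrow> nat set \<Rightarrow> bool" where
  "is_gluing A1 A2 \<longleftrightarrow> A1 \<noteq> {} \<and> A2 \<noteq> {} \<and> A1 \<inter> A2 = {} \<and>
     lcm (Gcd A1) (Gcd A2) \<in> monoid_gen A1 \<inter> monoid_gen A2"

definition dseq :: "(nat \<Rightarrow> nat) \<Rightarrow> nat \<Rightarrow> nat" where
  "dseq r k = Gcd (r ` {..<k})"

definition eseq :: "(nat \<Rightarrow> nat) \<Rightarrow> nat \<Rightarrow> nat" where
  "eseq r k = dseq r k div dseq r (Suc k)"

primrec free_for :: "(nat \<Rightarrow> nat) \<Rightarrow> nat \<Rightarrow> bool" where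
  "free_for r 0 = True"
| "free_for r (Suc h) =
     (is_gluing (r ` {..h}) {r (Suc h)} \<and>
      free_for (\<lambda>i. r i div dseq r (Suc h)) h)"

definition telescopic :: "nat set \<Rightarrow> bool" where
  "telescopic S \<longleftrightarrow> (\<exists>r h. strict_mono_on {..h} r \<and> minimally_generated_by S r h \<and> free_for r h)"

definition plane_curve_semigroup :: "nat set \<Rightarrow> bool" where
  "plane_curve_semigroup S \<longleftrightarrow> numerical_semigroup S \<and>
     (\<exists>r h. strict_mono_on {..h} r \<and> minimally_generated_by S r h \<and> free_for r h \<and>
        (\<forall>k. 1 \<le> k \<and> k \<le> h - 1 \<longrightarrow> eseq r k * r k < r (Suc k)))"

end

theory Submission
  imports Defs
begin

text \<open>For a free arrangement the gluing relations \<open>e\<^sub>k r\<^sub>k \<in> \<langle>r\<^sub>0, \<dots>, r\<^sub>k\<^sub>-\<^sub>1\<rangle>\<close> give every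
  element of the semigroup a normal form \<open>y r\<^sub>0 + \<Sum> b\<^sub>k r\<^sub>k\<close> with \<open>0 \<le> b\<^sub>k < e\<^sub>k\<close> and
  \<open>y \<ge> 0\<close>, which is unique; hence \<open>F = \<Sum> (e\<^sub>k - 1) r\<^sub>k - r\<^sub>0\<close> is a gap and \<open>c > F\<close>.
  Minimality forces \<open>e\<^sub>k \<ge> 2\<close>, and since \<open>d\<^sub>k\<^sub>+\<^sub>2\<close> divides both \<open>e\<^sub>k r\<^sub>k\<close> and \<open>r\<^sub>k\<^sub>+\<^sub>1\<close>, the
  plane-curve condition \<open>e\<^sub>k r\<^sub>k < r\<^sub>k\<^sub>+\<^sub>1\<close> sharpens to \<open>r\<^sub>k\<^sub>+\<^sub>1 \<ge> 2 r\<^sub>k + d\<^sub>k\<^sub>+\<^sub>2\<close>. An induction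
  on \<open>k\<close> then gives \<open>3 F \<ge> 5\<cdot>4\<^sup>h - 9\<cdot>2\<^sup>h + 1\<close>, and solving
  \<open>3 c \<ge> 5\<cdot>4\<^sup>h - 9\<cdot>2\<^sup>h + 4\<close> for \<open>2\<^sup>h\<close> gives the bound.\<close>

lemma monoid_gen_mono: "x \<in> monoid_gen A \<Longrightarrow> A \<subseteq> B \<Longrightarrow> x \<in> monoid_gen B"
  by (induction rule: monoid_gen.induct) (auto intro: monoid_gen.intros)

lemma monoid_gen_add: "x \<in> monoid_gen A \<Longrightarrow> y \<in> monoid_gen A \<Longrightarrow> x + y \<in> monoid_gen A"
  by (induction rule: monoid_gen.induct) (auto simp: add.assoc intro: monoid_gen.intros)

lemma monoid_gen_generator: "a \<in> A \<Longrightarrow> a \<in> monoid_gen A"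
  using monoid_gen.add[OF _ monoid_gen.zero] by simp

lemma monoid_gen_mult: "x \<in> monoid_gen A \<Longrightarrow> m * x \<in> monoid_gen A"
  by (induction m) (auto intro: monoid_gen_add monoid_gen.zero)

lemma monoid_gen_image_mult: "x \<in> monoid_gen A \<Longrightarrow> c * x \<in> monoid_gen ((*) c ` A)"
  by (induction rule: monoid_gen.induct) (auto simp: distrib_left intro: monoid_gen.intros)

lemma Gcd_dvd_monoid_gen: "x \<in> monoid_gen A \<Longrightarrow> Gcd A dvd x"
  by (induction rule: monoid_gen.induct) auto

lemma monoid_gen_remove_greater: "x \<in> monoid_gen A \<Longrightarrow> x < a \<Longrightarrow> x \<in> monoid_gen (A - {a})"
  by (induction rule: monoid_gen.induct) (auto intro: monoid_gen.intros)

lemma monoid_gen_pos_decomp: "x \<in> monoid_gen A \<Longrightarrow> 0 < x \<Longrightarrow> \<exists>a\<in>A. \<exists>y\<in>monoid_gen A. x = a + y"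
  by (induction rule: monoid_gen.induct) auto

lemma monoid_gen_insert_decomp:
  "x \<in> monoid_gen (insert a A) \<Longrightarrow> \<exists>t\<in>monoid_gen A. \<exists>m. x = t + m * a"
proof (induction rule: monoid_gen.induct)
  case zero
  then show ?case using monoid_gen.zero by force
next
  case (add x y)
  then obtain t m where t: "t \<in> monoid_gen A" "y = t + m * a" by blast
  show ?case
  proof (cases "x = a")
    case True
    then show ?thesis using t by (intro bexI[of _ t] exI[of _ "Suc m"]) auto
  next
    case False
    with add t have "x + t \<in> monoid_gen A" by (auto intro: monoid_gen.add)
    then show ?thesis using t by (intro bexI[of _ "x + t"] exI[of _ m]) auto
  qed
qed

lemma monoid_gen_insert_reduced:
  assumes "x \<in> monoid_gen (insert a A)" "0 < E" "E * a \<in> monoid_gen A"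
  obtains t b where "t \<in> monoid_gen A" "b < E" "x = t + b * a"
proof -
  obtain t m where t: "t \<in> monoid_gen A" and x: "x = t + m * a"
    using monoid_gen_insert_decomp[OF assms(1)] by blast
  have "t + (m div E) * (E * a) \<in> monoid_gen A"
    using t monoid_gen_mult[OF assms(3)] by (rule monoid_gen_add)
  moreover have "x = t + (m div E) * (E * a) + (m mod E) * a"
    unfolding x by (metis add.assoc add_mult_distrib div_mult_mod_eq mult.assoc)
  moreover have "m mod E < E" using assms(2) by simp
  ultimately show thesis using that by blast
qed

definition irreducibles :: "nat set \<Rightarrow> nat set" where
  "irreducibles S = {s\<in>S. 0 < s \<and> \<not> (\<exists>a\<in>S. \<exists>b\<in>S. 0 < a \<and> 0 < b \<and> s = a + b)}"

lemma minimally_generated_by_image_eq_irreducibles: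
  assumes "minimally_generated_by S r h"
  shows "r ` {..h} = irreducibles S"
proof
  have S: "S = monoid_gen (r ` {..h})"
    and min: "\<And>i. i \<le> h \<Longrightarrow> 0 < r i \<and> r i \<notin> monoid_gen (r ` ({..h} - {i}))"
    using assms by (auto simp: minimally_generated_by_def)
  show "r ` {..h} \<subseteq> irreducibles S"
  proof
    fix x assume "x \<in> r ` {..h}"
    then obtain i where i: "i \<le> h" "x = r i" by auto
    have "\<not> (\<exists>a\<in>S. \<exists>b\<in>S. 0 < a \<and> 0 < b \<and> x = a + b)"
    proof
      assume "\<exists>a\<in>S. \<exists>b\<in>S. 0 < a \<and> 0 < b \<and> x = a + b"
      then obtain a b where ab: "a \<in> S" "b \<in> S" "0 < a" "0 < b" "x = a + b" by auto
      have "a \<in> monoid_gen (r ` {..h} - {x})" "b \<in> monoid_gen (r ` {..h} - {x})"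
        using ab S by (auto intro: monoid_gen_remove_greater)
      then have "x \<in> monoid_gen (r ` {..h} - {x})" using ab monoid_gen_add by auto
      then have "r i \<in> monoid_gen (r ` ({..h} - {i}))" using i by (auto elim: monoid_gen_mono)
      then show False using min i by auto
    qed
    then show "x \<in> irreducibles S"
      using S i min by (auto simp: irreducibles_def intro: monoid_gen_generator)
  qed
  show "irreducibles S \<subseteq> r ` {..h}"
  proof
    fix x assume x: "x \<in> irreducibles S"
    then have "x \<in> monoid_gen (r ` {..h})" "0 < x" using S by (auto simp: irreducibles_def)
    then obtain a y where a: "a \<in> r ` {..h}" and y: "y \<in> S" and "x = a + y"
      using S monoid_gen_pos_decomp by blast
    moreover have "a \<in> S" "0 < a" using a S min by (auto intro: monoid_gen_generator)
    then have "y = 0" using x y \<open>x = a + y\<close> by (auto simp: irreducibles_def)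
    ultimately show "x \<in> r ` {..h}" by simp
  qed
qed

lemma minimally_generated_by_inj_on:
  assumes "minimally_generated_by S r h"
  shows "inj_on r {..h}"
proof
  fix i j assume "i \<in> {..h}" "j \<in> {..h}" "r i = r j"
  show "i = j"
  proof (rule ccontr)
    assume "i \<noteq> j"
    then have "r i \<in> monoid_gen (r ` ({..h} - {i}))"
      using \<open>j \<in> {..h}\<close> \<open>r i = r j\<close> by (auto intro: monoid_gen_generator)
    then show False using assms \<open>i \<in> {..h}\<close> by (auto simp: minimally_generated_by_def)
  qed
qed

lemma minimally_generated_by_length_unique:
  assumes "minimally_generated_by S r h" "minimally_generated_by S r' h'"
  shows "h = h'"
proof -
  have "card (r ` {..h}) = card (r' ` {..h'})"
    using assms by (simp add: minimally_generated_by_image_eq_irreducibles)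
  then show ?thesis
    using assms by (simp add: card_image minimally_generated_by_inj_on)
qed

lemma dseq_Suc: "dseq r (Suc k) = gcd (r k) (dseq r k)"
  by (simp add: dseq_def lessThan_Suc)

lemma dseq_Suc_eq_Gcd: "dseq r (Suc n) = Gcd (r ` {..n})"
  by (simp add: dseq_def lessThan_Suc_atMost)

lemma dseq_dvd: "j < k \<Longrightarrow> dseq r k dvd r j"
  by (simp add: dseq_def)

lemma dseq_Suc_dvd: "dseq r (Suc k) dvd dseq r k"
  by (simp add: dseq_Suc)

lemma dseq_pos: "0 < r 0 \<Longrightarrow> 1 \<le> k \<Longrightarrow> 0 < dseq r k"
proof (induction k)
  case (Suc k)
  then show ?case by (cases k) (auto simp: dseq_Suc dseq_def[of r 0])
qed simp

lemma dseq_eq_eseq_mult: "dseq r k = eseq r k * dseq r (Suc k)"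
  by (simp add: eseq_def dseq_Suc)

lemma eseq_pos: "0 < r 0 \<Longrightarrow> 1 \<le> k \<Longrightarrow> 0 < eseq r k"
  using dseq_pos[of r k] dseq_eq_eseq_mult[of r k] by (cases "eseq r k") auto

lemma lcm_dseq_eq_eseq_mult: "lcm (dseq r k) (r k) = eseq r k * r k"
  by (simp add: lcm_nat_def eseq_def dseq_Suc gcd.commute div_mult_swap mult.commute)

lemma dseq_scale: "(\<And>i. i < k \<Longrightarrow> r i = D * r' i) \<Longrightarrow> dseq r k = D * dseq r' k"
proof -
  assume "\<And>i. i < k \<Longrightarrow> r i = D * r' i"
  then have "r ` {..<k} = (*) D ` r' ` {..<k}" by (auto simp: image_image)
  then show ?thesis by (simp add: dseq_def Gcd_mult)
qed

text \<open>\<open>e\<^sub>k r\<^sub>k = lcm(d\<^sub>k, r\<^sub>k)\<close>: the top level is the gluing condition, the lower levels come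
  from the rescaled arrangement \<open>r\<^sub>i / d\<^sub>h\<close>, which has the same \<open>e\<^sub>k\<close>.\<close>
lemma free_for_eseq_mult_mem:
  assumes "free_for r h" "0 < r 0" "1 \<le> k" "k \<le> h"
  shows "eseq r k * r k \<in> monoid_gen (r ` {..<k})"
  using assms
proof (induction h arbitrary: r k)
  case 0
  then show ?case by simp
next
  case (Suc h)
  define D where "D = dseq r (Suc h)"
  define r' where "r' = (\<lambda>i. r i div D)"
  have glue: "is_gluing (r ` {..h}) {r (Suc h)}" and free': "free_for r' h"
    using Suc.prems(1) by (simp_all add: D_def r'_def)
  have "0 < D" unfolding D_def using Suc.prems(2) by (rule dseq_pos) simp
  have r_eq: "r i = D * r' i" if "i \<le> h" for i
    using that dseq_dvd[of i "Suc h" r] by (simp add: r'_def D_def)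
  show ?case
  proof (cases "k = Suc h")
    case True
    have "Gcd (r ` {..h}) = D" by (simp add: D_def dseq_Suc_eq_Gcd)
    then show ?thesis
      using glue lcm_dseq_eq_eseq_mult[of r "Suc h"] True
      by (simp add: is_gluing_def D_def lessThan_Suc_atMost)
  next
    case False
    then have "k \<le> h" using Suc.prems by simp
    have "0 < r' 0" using Suc.prems(2) r_eq[of 0] by simp
    then have "eseq r' k * r' k \<in> monoid_gen (r' ` {..<k})"
      using Suc.IH[OF free' _ Suc.prems(3) \<open>k \<le> h\<close>] by blast
    then have "D * (eseq r' k * r' k) \<in> monoid_gen ((*) D ` r' ` {..<k})"
      by (rule monoid_gen_image_mult)
    moreover have "(*) D ` r' ` {..<k} = r ` {..<k}"
      using r_eq \<open>k \<le> h\<close> by (force simp: image_image)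
    moreover have "eseq r k = eseq r' k"
      using dseq_scale[of k r D r'] dseq_scale[of "Suc k" r D r'] r_eq \<open>k \<le> h\<close> \<open>0 < D\<close>
      by (simp add: eseq_def)
    ultimately show ?thesis using r_eq \<open>k \<le> h\<close> by (simp add: mult.left_commute)
  qed
qed

lemma minimal_free_eseq_ge_2:
  assumes "minimally_generated_by S r h" "free_for r h" "1 \<le> k" "k \<le> h"
  shows "2 \<le> eseq r k"
proof -
  have min: "\<And>i. i \<le> h \<Longrightarrow> 0 < r i \<and> r i \<notin> monoid_gen (r ` ({..h} - {i}))"
    using assms(1) by (auto simp: minimally_generated_by_def)
  then have mem: "eseq r k * r k \<in> monoid_gen (r ` {..<k})"
    using free_for_eseq_mult_mem assms(2-4) by auto
  have "eseq r k \<noteq> 0"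
    using dseq_eq_eseq_mult[of r k] dseq_pos[of r k] min assms(3) by auto
  moreover have "eseq r k \<noteq> 1"
  proof
    assume "eseq r k = 1"
    then have "r k \<in> monoid_gen (r ` ({..h} - {k}))"
      using mem assms(4) by (auto elim!: monoid_gen_mono)
    then show False using min assms(4) by auto
  qed
  ultimately show ?thesis by linarith
qed

text \<open>Since \<open>d\<^sub>k\<^sub>+\<^sub>1 = gcd(r\<^sub>k, d\<^sub>k)\<close>, the quotients \<open>r\<^sub>k / d\<^sub>k\<^sub>+\<^sub>1\<close> and
  \<open>e\<^sub>k = d\<^sub>k / d\<^sub>k\<^sub>+\<^sub>1\<close> are coprime.\<close>
lemma eseq_dvd_of_dseq_dvd_mult:
  fixes x :: int
  assumes "0 < dseq r (Suc k)" "int (dseq r k) dvd x * int (r k)"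
  shows "int (eseq r k) dvd x"
proof -
  define g where "g = dseq r (Suc k)"
  obtain \<rho> where \<rho>: "r k = g * \<rho>"
    using dseq_dvd[of k "Suc k" r] by (auto simp: g_def elim: dvdE)
  have dk: "dseq r k = g * eseq r k" using dseq_eq_eseq_mult[of r k] by (simp add: g_def)
  have "g = gcd (r k) (dseq r k)" unfolding g_def by (rule dseq_Suc)
  also have "\<dots> = g * gcd \<rho> (eseq r k)" by (simp add: \<rho> dk gcd_mult_left)
  finally have "gcd \<rho> (eseq r k) = 1"
    using assms(1) unfolding g_def[symmetric] by simp
  then have "coprime (int (eseq r k)) (int \<rho>)"
    by (simp add: coprime_iff_gcd_eq_1 gcd.commute)
  moreover have "int g * int (eseq r k) dvd int g * (x * int \<rho>)"
    using assms(2) unfolding dk \<rho> by (simp add: ac_simps)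
  then have "int (eseq r k) dvd x * int \<rho>" using assms(1) by (simp add: g_def)
  ultimately show ?thesis by (simp add: coprime_dvd_mult_left_iff)
qed

text \<open>Uniqueness of the normal form \<open>y r\<^sub>0 + \<Sum> b\<^sub>j r\<^sub>j\<close>, \<open>0 \<le> b\<^sub>j < e\<^sub>j\<close>: reducing the coefficient
  of \<open>r\<^sub>n\<close> modulo \<open>e\<^sub>n\<close> with the gluing relation gives a second such form of \<open>s\<close>, and
  comparing the two modulo \<open>d\<^sub>n\<close> shows that their coefficients of \<open>r\<^sub>n\<close> agree.\<close>
lemma free_normal_form_coeff_nonneg:
  assumes "0 < r 0"
    and "\<And>k. 1 \<le> k \<Longrightarrow> k \<le> n \<Longrightarrow> eseq r k * r k \<in> monoid_gen (r ` {..<k})"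
    and "s \<in> monoid_gen (r ` {..n})"
    and "\<And>j. 1 \<le> j \<Longrightarrow> j \<le> n \<Longrightarrow> b j < eseq r j"
    and "int s = y * int (r 0) + (\<Sum>j=1..n. int (b j) * int (r j))"
  shows "0 \<le> y"
  using assms(2-)
proof (induction n arbitrary: s y)
  case 0
  then have "r 0 dvd s" using Gcd_dvd_monoid_gen by fastforce
  then obtain q where "s = r 0 * q" by (auto elim: dvdE)
  then have "y = int q" using 0 \<open>0 < r 0\<close> by simp
  then show ?case by simp
next
  case (Suc n)
  define E where "E = eseq r (Suc n)"
  define X where "X = y * int (r 0) + (\<Sum>j=1..n. int (b j) * int (r j))"
  have "0 < dseq r (Suc (Suc n))" using \<open>0 < r 0\<close> by (rule dseq_pos) simp
  have "s \<in> monoid_gen (insert (r (Suc n)) (r ` {..n}))"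
    using Suc.prems(2) by (simp add: atMost_Suc)
  moreover have "0 < E"
    using \<open>0 < r 0\<close> \<open>0 < dseq r (Suc (Suc n))\<close> dseq_pos[of r "Suc n"]
      dseq_eq_eseq_mult[of r "Suc n"]
    by (simp add: E_def)
  moreover have "E * r (Suc n) \<in> monoid_gen (r ` {..n})"
    using Suc.prems(1)[of "Suc n"] by (simp add: E_def lessThan_Suc_atMost)
  ultimately obtain t c where t: "t \<in> monoid_gen (r ` {..n})" and "c < E"
    and s: "s = t + c * r (Suc n)"
    by (rule monoid_gen_insert_reduced)
  have s': "int s = X + int (b (Suc n)) * int (r (Suc n))"
    using Suc.prems(4) by (simp add: X_def)
  have "int (dseq r (Suc n)) dvd X"
    unfolding X_def by (intro dvd_add dvd_mult dvd_sum) (auto simp: dseq_dvd)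
  moreover have "int (dseq r (Suc n)) dvd int t"
    using Gcd_dvd_monoid_gen[OF t] by (simp add: dseq_Suc_eq_Gcd)
  moreover have diff: "(int c - int (b (Suc n))) * int (r (Suc n)) = X - int t"
    using s s' by (simp add: algebra_simps)
  ultimately have "int (dseq r (Suc n)) dvd (int c - int (b (Suc n))) * int (r (Suc n))"
    by simp
  then have "int E dvd int c - int (b (Suc n))"
    unfolding E_def by (rule eseq_dvd_of_dseq_dvd_mult[OF \<open>0 < dseq r (Suc (Suc n))\<close>])
  moreover have "\<bar>int c - int (b (Suc n))\<bar> < int E"
    using \<open>c < E\<close> Suc.prems(3)[of "Suc n"] by (auto simp: E_def)
  ultimately have "int c - int (b (Suc n)) = 0"
    using dvd_imp_le_int[of "int c - int (b (Suc n))" "int E"] by linarith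
  then have "int t = X" using diff by simp
  then show ?case
    using Suc.IH[OF _ t] Suc.prems(1,3) by (simp add: X_def)
qed

text \<open>For a free arrangement this is the Frobenius number; only its being a gap is used.\<close>
definition free_frobenius :: "(nat \<Rightarrow> nat) \<Rightarrow> nat \<Rightarrow> int" where
  "free_frobenius r h = (\<Sum>j=1..h. (int (eseq r j) - 1) * int (r j)) - int (r 0)"

lemma free_frobenius_not_mem:
  assumes "free_for r h" "0 < r 0" "s \<in> monoid_gen (r ` {..h})"
  shows "int s \<noteq> free_frobenius r h"
proof
  assume "int s = free_frobenius r h"
  also have "\<dots> = (-1) * int (r 0) + (\<Sum>j=1..h. int (eseq r j - 1) * int (r j))"
    using eseq_pos[of r] assms(2) by (simp add: free_frobenius_def of_nat_diff Suc_le_eq)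
  finally have "0 \<le> (-1 :: int)"
    using assms eseq_pos[of r] free_for_eseq_mult_mem[OF assms(1,2)]
    by (intro free_normal_form_coeff_nonneg[where b = "\<lambda>j. eseq r j - 1"]) auto
  then show False by simp
qed

lemma dvd_less_imp_add_le:
  fixes d a b :: nat
  assumes "d dvd a" "d dvd b" "a < b"
  shows "a + d \<le> b"
proof -
  have "d dvd b - a" using assms(2,1) by (rule dvd_diff_nat)
  then have "d \<le> b - a" using assms(3) by (intro dvd_imp_le) auto
  then show ?thesis using assms(3) by simp
qed

lemma next_generator_ge:
  assumes "a < r (Suc k)" "dseq r (Suc k) dvd a"
  shows "a + dseq r (Suc (Suc k)) \<le> r (Suc k)"
  using dvd_trans[OF dseq_Suc_dvd assms(2)] dseq_dvd[of "Suc k" "Suc (Suc k)" r] assms(1)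
  by (rule dvd_less_imp_add_le) simp

lemma second_generator_ge:
  assumes "r 0 < r 1"
  shows "(eseq r 1 + 1) * dseq r 2 \<le> r 1"
proof -
  have "r 0 + dseq r 2 \<le> r 1"
    using next_generator_ge[of "r 0" r 0] assms by (simp add: dseq_dvd numeral_2_eq_2)
  moreover have "r 0 = eseq r 1 * dseq r 2"
    using dseq_eq_eseq_mult[of r 1] dseq_Suc_eq_Gcd[of r 0] by (simp add: numeral_2_eq_2)
  ultimately show ?thesis by simp
qed

lemma plane_generator_lower_bound:
  assumes e2: "\<And>j. 1 \<le> j \<Longrightarrow> j \<le> h \<Longrightarrow> 2 \<le> eseq r j" and "r 0 < r 1"
    and incr: "\<And>j. 1 \<le> j \<Longrightarrow> j < h \<Longrightarrow> eseq r j * r j < r (Suc j)"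
    and "1 \<le> k" "k \<le> h"
  shows "5 * 4 ^ k * int (dseq r (Suc k)) \<le> 6 * int (r k) + 2 * int (dseq r (Suc k))"
  using \<open>1 \<le> k\<close> \<open>k \<le> h\<close>
proof (induction k rule: dec_induct)
  case base
  have "2 * dseq r 2 \<le> eseq r 1 * dseq r 2" using e2[of 1] base by simp
  then show ?case using second_generator_ge[OF \<open>r 0 < r 1\<close>]
    by (simp add: numeral_2_eq_2 flip: of_nat_add of_nat_mult)
next
  case (step n)
  let ?d = "dseq r (Suc (Suc n))"
  have "eseq r n * r n + ?d \<le> r (Suc n)"
    using next_generator_ge incr[of n] step dseq_dvd[of n "Suc n" r] by simp
  moreover have "2 * r n \<le> eseq r n * r n" using e2[of n] step by simp
  ultimately have r: "2 * int (r n) + int ?d \<le> int (r (Suc n))" by linarith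
  have "2 * ?d \<le> eseq r (Suc n) * ?d" using e2[of "Suc n"] step by simp
  then have d: "2 * int ?d \<le> int (dseq r (Suc n))"
    using dseq_eq_eseq_mult[of r "Suc n"] by linarith
  moreover have "(0 :: int) \<le> 10 * 4 ^ n - 4" using one_le_power[of "4::int" n] by linarith
  ultimately have "(10 * 4 ^ n - 4) * (2 * int ?d) \<le> (10 * 4 ^ n - 4) * int (dseq r (Suc n))"
    by (rule mult_left_mono)
  with r d show ?case using step.IH step.prems by (simp add: algebra_simps)
qed

lemma five_pow4_sub_nine_pow2_nonneg: "1 \<le> k \<Longrightarrow> (0 :: int) \<le> 5 * 4 ^ k - 9 * 2 ^ k + 1"
proof -
  assume "1 \<le> k"
  then have "(2 :: int) \<le> 2 ^ k" using power_increasing[of 1 k "2::int"] by simp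
  then have "2 * 2 ^ k \<le> (2 :: int) ^ k * 2 ^ k" by (intro mult_right_mono) auto
  then have "2 * 2 ^ k \<le> (4 :: int) ^ k" by (simp flip: power_mult_distrib)
  then show ?thesis using \<open>2 \<le> 2 ^ k\<close> by linarith
qed

lemma free_frobenius_Suc:
  "free_frobenius r (Suc n) = free_frobenius r n + (int (eseq r (Suc n)) - 1) * int (r (Suc n))"
  by (simp add: free_frobenius_def)

lemma plane_free_frobenius_lower_bound:
  assumes e2: "\<And>j. 1 \<le> j \<Longrightarrow> j \<le> h \<Longrightarrow> 2 \<le> eseq r j" and "r 0 < r 1"
    and incr: "\<And>j. 1 \<le> j \<Longrightarrow> j < h \<Longrightarrow> eseq r j * r j < r (Suc j)"
    and "1 \<le> k" "k \<le> h"
  shows "int (dseq r (Suc k)) * (5 * 4 ^ k - 9 * 2 ^ k + 1) \<le> 3 * free_frobenius r k"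
  using \<open>1 \<le> k\<close> \<open>k \<le> h\<close>
proof (induction k rule: dec_induct)
  case base
  define e where "e = int (eseq r 1)"
  define d where "d = int (dseq r 2)"
  have "2 \<le> e" using e2[of 1] base by (simp add: e_def)
  have "int ((eseq r 1 + 1) * dseq r 2) \<le> int (r 1)"
    using second_generator_ge[OF \<open>r 0 < r 1\<close>] by (simp only: of_nat_le_iff)
  then have r1: "(e + 1) * d \<le> int (r 1)" by (simp add: e_def d_def algebra_simps)
  have F1: "free_frobenius r 1 = (e - 1) * int (r 1) - e * d"
    using dseq_eq_eseq_mult[of r 1] dseq_Suc_eq_Gcd[of r 0]
    by (simp add: free_frobenius_def e_def d_def numeral_2_eq_2)
  have "(e - 1) * ((e + 1) * d) \<le> (e - 1) * int (r 1)"
    using r1 \<open>2 \<le> e\<close> by (intro mult_left_mono) auto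
  moreover have "0 \<le> (e - 2) * ((e + 1) * d)" using \<open>2 \<le> e\<close> by (simp add: d_def)
  moreover have "int (dseq r (Suc 1)) = d" by (simp add: d_def numeral_2_eq_2)
  ultimately show ?case unfolding F1 by (simp add: algebra_simps)
next
  case (step n)
  let ?d = "int (dseq r (Suc (Suc n)))" and ?B = "(5 * 4 ^ n - 9 * 2 ^ n + 1) :: int"
  have "2 * dseq r (Suc (Suc n)) \<le> eseq r (Suc n) * dseq r (Suc (Suc n))"
    using e2[of "Suc n"] step by simp
  then have "2 * ?d \<le> int (dseq r (Suc n))"
    using dseq_eq_eseq_mult[of r "Suc n"] by linarith
  then have "2 * ?d * ?B \<le> int (dseq r (Suc n)) * ?B"
    using five_pow4_sub_nine_pow2_nonneg[OF step.hyps(1)] by (rule mult_right_mono)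
  moreover have "int (r (Suc n)) \<le> (int (eseq r (Suc n)) - 1) * int (r (Suc n))"
    using mult_right_mono[of 1 "int (eseq r (Suc n)) - 1" "int (r (Suc n))"] e2[of "Suc n"] step
    by simp
  moreover have "5 * 4 ^ Suc n * ?d \<le> 6 * int (r (Suc n)) + 2 * ?d"
    using plane_generator_lower_bound[OF e2 \<open>r 0 < r 1\<close> incr _ step.prems] by simp
  ultimately show ?case
    using step.IH step.prems by (simp add: free_frobenius_Suc algebra_simps)
qed

lemma plane_free_frobenius_ge:
  assumes "0 < r 0" and e2: "\<And>j. 1 \<le> j \<Longrightarrow> j \<le> h \<Longrightarrow> 2 \<le> eseq r j" and "r 0 < r 1"
    and incr: "\<And>j. 1 \<le> j \<Longrightarrow> j < h \<Longrightarrow> eseq r j * r j < r (Suc j)"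
    and "1 \<le> h"
  shows "5 * 4 ^ h - 9 * 2 ^ h + 1 \<le> 3 * free_frobenius r h"
proof -
  have "1 \<le> int (dseq r (Suc h))" using dseq_pos[of r "Suc h"] \<open>0 < r 0\<close> by simp
  then have "5 * 4 ^ h - 9 * 2 ^ h + 1 \<le> int (dseq r (Suc h)) * (5 * 4 ^ h - 9 * 2 ^ h + 1)"
    using five_pow4_sub_nine_pow2_nonneg[OF \<open>1 \<le> h\<close>] by (simp add: mult_le_cancel_right1)
  also have "\<dots> \<le> 3 * free_frobenius r h"
    using plane_free_frobenius_lower_bound[OF e2 \<open>r 0 < r 1\<close> incr \<open>1 \<le> h\<close>] by simp
  finally show ?thesis .
qed

lemma nat_le_log2_of_bound:
  fixes h c :: nat
  assumes "5 * 4 ^ h - 9 * 2 ^ h + 4 \<le> 3 * int c"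
  shows "real h \<le> log 2 ((sqrt (60 * real c + 1) + 9) / 10)"
proof -
  define y :: real where "y = 2 ^ h"
  have "real_of_int (5 * 4 ^ h - 9 * 2 ^ h + 4) \<le> real_of_int (3 * int c)"
    using assms by (simp only: of_int_le_iff)
  moreover have "(4 :: real) ^ h = y * y" by (simp add: y_def flip: power_mult_distrib)
  ultimately have "5 * y * y - 9 * y + 4 \<le> 3 * real c" by (simp add: y_def mult.assoc)
  then have "(10 * y - 9) ^ 2 \<le> 60 * real c + 1"
    by (simp add: power2_eq_square algebra_simps)
  then have y_le: "y \<le> (sqrt (60 * real c + 1) + 9) / 10"
    using real_le_rsqrt by fastforce
  have "real h = log 2 y" by (simp add: y_def log_nat_power)
  also have "\<dots> \<le> log 2 ((sqrt (60 * real c + 1) + 9) / 10)"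
    using y_le by (intro log_mono) (auto simp: y_def)
  finally show ?thesis .
qed

lemma less_conductor_if_not_mem:
  assumes "numerical_semigroup S" "n \<notin> S"
  shows "n < conductor S"
proof -
  have "finite (UNIV - S)" using assms(1) by (simp add: numerical_semigroup_def)
  then have "n \<le> Max (UNIV - S)" using assms(2) by (intro Max_ge) auto
  then show ?thesis using assms(2) by (auto simp: conductor_def)
qed

lemma free_frobenius_less_conductor:
  assumes "numerical_semigroup S" "S = monoid_gen (r ` {..h})" "free_for r h" "0 < r 0"
  shows "free_frobenius r h < int (conductor S)"
proof (cases "free_frobenius r h < 0")
  case False
  then have "int (nat (free_frobenius r h)) = free_frobenius r h" by simp
  then have "nat (free_frobenius r h) \<notin> S"
    using free_frobenius_not_mem[OF assms(3,4)] assms(2) by metis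
  then show ?thesis using less_conductor_if_not_mem[OF assms(1)] by fastforce
qed simp

text \<open>The arrangement \<open>r\<close> of the statement only fixes \<open>h\<close>; the argument runs on the arrangement
  witnessing \<open>plane_curve_semigroup S\<close>, which has the same length.\<close>
theorem corollary5p4:
  fixes S :: "nat set" and r :: "nat \<Rightarrow> nat" and h :: nat
  assumes "plane_curve_semigroup S"
    and "strict_mono_on {..h} r"
    and "minimally_generated_by S r h"
    and "h \<ge> 2"
  shows "real h \<le> log 2 ((sqrt (60 * real (conductor S) + 1) + 9) / 10)"
proof -
  obtain g h' where mono: "strict_mono_on {..h'} g" and min: "minimally_generated_by S g h'"
    and free: "free_for g h'" and incr: "\<forall>k. 1 \<le> k \<and> k \<le> h' - 1 \<longrightarrow> eseq g k * g k < g (Suc k)"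
    and "numerical_semigroup S"
    using assms(1) unfolding plane_curve_semigroup_def by blast
  have "h' = h" using minimally_generated_by_length_unique[OF min assms(3)] .
  have "0 < g 0" and S: "S = monoid_gen (g ` {..h})"
    using min \<open>h' = h\<close> by (simp_all add: minimally_generated_by_def)
  have "\<And>j. 1 \<le> j \<Longrightarrow> j \<le> h \<Longrightarrow> 2 \<le> eseq g j"
    using minimal_free_eseq_ge_2[OF min free] \<open>h' = h\<close> by simp
  moreover have "g 0 < g 1" using mono \<open>h' = h\<close> assms(4) by (simp add: strict_mono_on_def)
  moreover have "\<And>j. 1 \<le> j \<Longrightarrow> j < h \<Longrightarrow> eseq g j * g j < g (Suc j)"
    using incr \<open>h' = h\<close> by auto
  ultimately have "5 * 4 ^ h - 9 * 2 ^ h + 1 \<le> 3 * free_frobenius g h"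
    using plane_free_frobenius_ge[of g h] \<open>0 < g 0\<close> assms(4) by simp
  moreover have "free_frobenius g h < int (conductor S)"
    using free_frobenius_less_conductor[OF \<open>numerical_semigroup S\<close> S] free \<open>h' = h\<close> \<open>0 < g 0\<close>
    by simp
  ultimately show ?thesis by (intro nat_le_log2_of_bound) linarith
qed

end
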